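(* There is an absolute constant $C$ such that for the Adaptive-Threshold Dealer with any $n$ and $d$, and every stage $\tau\ge 0$ of the Adaptive phase, $\mathbb E[\Phi(\mathbf X^\tau)]\le C\cdot d$.
   Context: Adaptive-Threshold Dealer with $d$ mini-decks on $n$ cards ($d\mid n$): the deck is split into $d$ mini-decks, each a fixed ordered stack of $n/d$ cards. Let $L_{i,t}$ be the number of cards drawn from mini-deck $i$ before turn $t$. Adaptive phase (turns $t=1,\dots,n-2d$): repeatedly sample $i\in[d]$ uniformly until $L_{i,t}<\lceil t/d\rceil+1$, then draw the top card of mini-deck $i$. Stage $\tau\ge1$ consists of the turns $t$ with $\lceil t/d\rceil=\tau$ (turns $(\tau-1)d+1,\dots,\tau d$). Let $\mathbf L_i^\tau$ be the number of cards drawn from mini-deck $i$ by the end of stage $\tau$ (i.e. in turns $1,\dots,\tau d$), and $\mathbf X_i^\tau=\tau+2-\mathbf L_i^\tau$ the number of holes at the end of stage $\tau$; $\mathbf X^0=(2,\dots,2)$. With $\epsilon=1/200$, the potential of a vector $x\in\mathbb Z^d$ is $\Phi(x)=\sum_{i=1}^d(1+\epsilon)^{x_i}$. *)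

theory Defs
  imports "HOL-Probability.Probability"
begin

text \<open>Mini-decks are indexed by 0..d-1. A state L maps mini-deck i to the number
of cards drawn from it so far. Turns are numbered t = 1, 2, ....\<close>

definition threshold :: "nat \<Rightarrow> nat \<Rightarrow> nat" where
  "threshold d t = nat \<lceil>real t / real d\<rceil> + 1"

partial_function (spmf) sample_deck :: "nat \<Rightarrow> (nat \<Rightarrow> nat) \<Rightarrow> nat \<Rightarrow> nat spmf" where
  "sample_deck d L bound =
     bind_spmf (spmf_of_set {..<d})
       (\<lambda>i. if L i < bound then return_spmf i else sample_deck d L bound)"

fun adaptive_run :: "nat \<Rightarrow> nat \<Rightarrow> (nat \<Rightarrow> nat) spmf" where
  "adaptive_run d 0 = return_spmf (\<lambda>_. 0)"
| "adaptive_run d (Suc m) =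
     bind_spmf (adaptive_run d m)
       (\<lambda>L. bind_spmf (sample_deck d L (threshold d (Suc m)))
              (\<lambda>i. return_spmf (L(i := Suc (L i)))))"

definition holes :: "nat \<Rightarrow> (nat \<Rightarrow> nat) \<Rightarrow> nat \<Rightarrow> int" where
  "holes tau L i = int tau + 2 - int (L i)"

definition eps :: real where "eps = 1 / 200"

definition Phi :: "nat \<Rightarrow> (nat \<Rightarrow> int) \<Rightarrow> real" where
  "Phi d x = (\<Sum>i<d. (1 + eps) powi (x i))"

end

theory Submission
  imports Defs
begin

text \<open>
  During stage \<open>\<tau> + 1\<close> the threshold is fixed at \<open>\<tau> + 2\<close>, and a draw from mini-deck \<open>i\<close>
  divides its weight \<open>(1 + \<epsilon>)^X\<^sub>i\<close> by \<open>1 + \<epsilon>\<close>. As the deck is drawn uniformly among the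
  \<open>d - Z\<close> decks that are still open (\<open>Z\<close> the number of full decks), the potential drops in
  expectation by the fraction \<open>\<epsilon>/(1+\<epsilon>)\<close> of the weight of the open decks divided by \<open>d - Z\<close>.
  With \<open>d - Z\<close> replaced by \<open>d\<close>, the contraction over a whole stage would not compensate the
  factor \<open>1 + \<epsilon>\<close> by which the next stage inflates every weight; the extra gain comes from
  the full decks, whose expected number grows like \<open>s\<^sup>2/(6d)\<close> after \<open>s\<close> draws of the stage.
  This yields \<open>E \<Phi>(X\<^sup>\<tau>\<^sup>+\<^sup>1) \<le> r E \<Phi>(X\<^sup>\<tau>) + d/100\<close> with \<open>r < 1\<close> for \<open>d \<ge> 8\<close>, hence a uniform bound.
  For \<open>d < 8\<close> every mini-deck has at most \<open>d + 1\<close> holes anyway.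
\<close>

definition open_decks :: "nat \<Rightarrow> (nat \<Rightarrow> nat) \<Rightarrow> nat \<Rightarrow> nat set" where
  "open_decks d L b = {i. i < d \<and> L i < b}"

definition full_decks :: "nat \<Rightarrow> (nat \<Rightarrow> nat) \<Rightarrow> nat \<Rightarrow> nat set" where
  "full_decks d L b = {i. i < d \<and> L i = b}"

definition almost_full_decks :: "nat \<Rightarrow> (nat \<Rightarrow> nat) \<Rightarrow> nat \<Rightarrow> nat set" where
  "almost_full_decks d L b = {i. i < d \<and> Suc (L i) = b}"

lemma finite_open_decks [simp]: "finite (open_decks d L b)"
  and finite_full_decks [simp]: "finite (full_decks d L b)"
  and finite_almost_full_decks [simp]: "finite (almost_full_decks d L b)"
  by (simp_all add: open_decks_def full_decks_def almost_full_decks_def)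

text \<open>The first branch is never taken in the adaptive phase, see \<open>open_decks_nonempty\<close>.\<close>
definition draw :: "nat \<Rightarrow> nat \<Rightarrow> (nat \<Rightarrow> nat) \<Rightarrow> (nat \<Rightarrow> nat) pmf" where
  "draw d b L = (if open_decks d L b = {} then return_pmf L
     else map_pmf (\<lambda>i. L(i := Suc (L i))) (pmf_of_set (open_decks d L b)))"

fun adaptive_run_pmf :: "nat \<Rightarrow> nat \<Rightarrow> (nat \<Rightarrow> nat) pmf" where
  "adaptive_run_pmf d 0 = return_pmf (\<lambda>_. 0)"
| "adaptive_run_pmf d (Suc m) = adaptive_run_pmf d m \<bind> draw d (threshold d (Suc m))"

fun draws :: "nat \<Rightarrow> nat \<Rightarrow> (nat \<Rightarrow> nat) \<Rightarrow> nat \<Rightarrow> (nat \<Rightarrow> nat) pmf" where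
  "draws d b L 0 = return_pmf L"
| "draws d b L (Suc s) = draws d b L s \<bind> draw d b"

lemma finite_set_draw [simp]: "finite (set_pmf (draw d b L))"
  by (simp add: draw_def)

lemma finite_set_adaptive_run_pmf [simp]: "finite (set_pmf (adaptive_run_pmf d m))"
  by (induction m) auto

lemma finite_set_draws [simp]: "finite (set_pmf (draws d b L s))"
  by (induction s) auto

lemma set_draw:
  assumes "L' \<in> set_pmf (draw d b L)" "open_decks d L b \<noteq> {}"
  obtains i where "i \<in> open_decks d L b" "L' = L(i := Suc (L i))"
  using assms by (auto simp: draw_def)

lemma open_decks_nonempty:
  assumes "(\<Sum>i<d. L i) < d * b"
  shows "open_decks d L b \<noteq> {}"
proof
  assume "open_decks d L b = {}"
  then have "(\<Sum>i<d. b) \<le> (\<Sum>i<d. L i)"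
    by (intro sum_mono) (auto simp: open_decks_def)
  with assms show False by simp
qed

lemma sum_fun_upd_Suc:
  fixes L :: "nat \<Rightarrow> nat"
  assumes "i < d"
  shows "(\<Sum>j<d. (L(i := Suc (L i))) j) = Suc (\<Sum>j<d. L j)"
  using assms by (simp add: sum.remove[of "{..<d}" i])

lemma threshold_mono: "threshold d m \<le> threshold d (Suc m)"
  unfolding threshold_def
  by (intro add_right_mono nat_mono ceiling_mono divide_right_mono) auto

lemma less_mult_threshold:
  assumes "0 < d"
  shows "m < d * threshold d m"
proof -
  have "real m / real d \<le> real (nat \<lceil>real m / real d\<rceil>)"
    by linarith
  then have "real m \<le> real (d * nat \<lceil>real m / real d\<rceil>)"
    using assms by (simp only: of_nat_mult pos_divide_le_eq of_nat_0_less_iff mult.commute)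
  then have "m \<le> d * nat \<lceil>real m / real d\<rceil>"
    by (simp only: of_nat_le_iff)
  with assms show ?thesis
    by (simp add: threshold_def)
qed

lemma threshold_stage_start: "0 < d \<Longrightarrow> threshold d (tau * d) = tau + 1"
  by (simp add: threshold_def)

lemma threshold_in_stage:
  assumes "s < d"
  shows "threshold d (Suc (tau * d + s)) = tau + 2"
proof -
  have "\<lceil>real (Suc (tau * d + s)) / real d\<rceil> = int tau + 1"
    using assms by (intro ceiling_unique) (simp_all add: field_simps)
  then show ?thesis
    by (simp add: threshold_def)
qed

lemma open_decks_threshold_nonempty:
  assumes "0 < d" "(\<Sum>i<d. L i) = m"
  shows "open_decks d L (threshold d (Suc m)) \<noteq> {}"
  using assms less_mult_threshold[OF assms(1), of "Suc m"] by (intro open_decks_nonempty) simp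

text \<open>
  Unfolding the rejection loop once gives \<open>d p(x) = [x \<in> S] + (d - |S|) p(x)\<close>, whose only solution
  is \<open>p(x) = [x \<in> S] / |S|\<close>.
\<close>
lemma sample_deck_eq_spmf_of_set:
  assumes ne: "open_decks d L b \<noteq> {}"
  shows "sample_deck d L b = spmf_of_set (open_decks d L b)"
proof (rule spmf_eqI)
  fix x
  let ?S = "open_decks d L b" and ?p = "sample_deck d L b"
  have d: "0 < d" and sub: "?S \<subseteq> {..<d}"
    using ne by (auto simp: open_decks_def)
  have "spmf ?p x = (\<Sum>i<d. spmf (if L i < b then return_spmf i else ?p) x) / real d"
    using d by (subst sample_deck.simps) (simp add: spmf_bind measure_spmf_spmf_of_set integral_pmf_of_set)
  also have "(\<Sum>i<d. spmf (if L i < b then return_spmf i else ?p) x)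
      = (\<Sum>i\<in>?S. spmf (return_spmf i) x) + (\<Sum>i\<in>{..<d} - ?S. spmf ?p x)"
    using sub by (subst sum.subset_diff[OF sub finite_lessThan], subst add.commute)
      (auto intro!: arg_cong2[where f = "(+)"] sum.cong simp: open_decks_def)
  also have "\<dots> = indicator ?S x + real (d - card ?S) * spmf ?p x"
    using sub by (simp add: card_Diff_subset indicator_def)
  finally have "real d * spmf ?p x = indicator ?S x + real (d - card ?S) * spmf ?p x"
    using d by (simp add: field_simps)
  moreover have "card ?S \<le> d"
    using card_mono[OF _ sub] by simp
  ultimately have "real (card ?S) * spmf ?p x = indicator ?S x"
    by (simp add: of_nat_diff algebra_simps)
  moreover have "card ?S > 0"
    using ne by (simp add: card_gt_0_iff)
  ultimately show "spmf ?p x = spmf (spmf_of_set ?S) x"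
    using ne by (simp add: spmf_of_set eq_divide_eq mult.commute)
qed

lemma adaptive_run_pmf_invariant:
  assumes "0 < d" "L \<in> set_pmf (adaptive_run_pmf d m)"
  shows "(\<Sum>i<d. L i) = m \<and> (\<forall>i<d. L i \<le> threshold d m)"
  using assms(2)
proof (induction m arbitrary: L)
  case (Suc m)
  then obtain L0 where L0: "L0 \<in> set_pmf (adaptive_run_pmf d m)"
    and L: "L \<in> set_pmf (draw d (threshold d (Suc m)) L0)"
    by auto
  from Suc.IH[OF L0] have sum: "(\<Sum>i<d. L0 i) = m" and le: "\<forall>i<d. L0 i \<le> threshold d m"
    by auto
  from L open_decks_threshold_nonempty[OF assms(1) sum]
  obtain i where i: "i \<in> open_decks d L0 (threshold d (Suc m))" and L: "L = L0(i := Suc (L0 i))"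
    by (rule set_draw)
  then have "i < d"
    by (simp add: open_decks_def)
  then have "(\<Sum>i<d. L i) = Suc m"
    by (simp only: L sum_fun_upd_Suc sum)
  moreover have "\<forall>j<d. L j \<le> threshold d (Suc m)"
    using le i threshold_mono[of d m] by (auto simp: L open_decks_def)
  ultimately show ?case
    by simp
qed simp

lemma adaptive_run_eq_spmf_of_pmf:
  assumes "0 < d"
  shows "adaptive_run d m = spmf_of_pmf (adaptive_run_pmf d m)"
proof (induction m)
  case (Suc m)
  let ?b = "threshold d (Suc m)"
  have "adaptive_run d (Suc m) = adaptive_run_pmf d m \<bind>
      (\<lambda>L. bind_spmf (sample_deck d L ?b) (\<lambda>i. return_spmf (L(i := Suc (L i)))))"
    by (simp add: Suc)
  also have "\<dots> = adaptive_run_pmf d m \<bind> (\<lambda>L. spmf_of_pmf (draw d ?b L))"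
  proof (rule bind_pmf_cong[OF refl])
    fix L assume "L \<in> set_pmf (adaptive_run_pmf d m)"
    then have ne: "open_decks d L ?b \<noteq> {}"
      using adaptive_run_pmf_invariant[OF assms] by (intro open_decks_threshold_nonempty[OF assms]) simp
    show "bind_spmf (sample_deck d L ?b) (\<lambda>i. return_spmf (L(i := Suc (L i))))
        = spmf_of_pmf (draw d ?b L)"
      using ne unfolding sample_deck_eq_spmf_of_set[OF ne] draw_def
      by (simp add: map_spmf_conv_bind_spmf[symmetric] spmf_of_pmf_pmf_of_set[symmetric]
          del: spmf_of_pmf_pmf_of_set)
  qed
  also have "\<dots> = spmf_of_pmf (adaptive_run_pmf d (Suc m))"
    by (simp add: spmf_of_pmf_bind)
  finally show ?case .
qed simp

lemma adaptive_run_pmf_stage: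
  assumes "s \<le> d"
  shows "adaptive_run_pmf d (tau * d + s) = adaptive_run_pmf d (tau * d) \<bind> (\<lambda>L. draws d (tau + 2) L s)"
  using assms
proof (induction s)
  case (Suc s)
  then show ?case
    using threshold_in_stage[of s d tau] by (simp add: bind_assoc_pmf)
qed (simp add: bind_return_pmf')

lemma expectation_bind_pmf_finite:
  fixes h :: "'b \<Rightarrow> real"
  assumes "finite (set_pmf p)" "\<And>x. finite (set_pmf (f x))"
  shows "measure_pmf.expectation (p \<bind> f) h
    = measure_pmf.expectation p (\<lambda>x. measure_pmf.expectation (f x) h)"
  using assms
  by (subst pmf_expectation_bind[of "set_pmf p"], simp_all, subst integral_measure_pmf[of "set_pmf p"]) auto

lemma expectation_mono_finite:
  fixes f g :: "'a \<Rightarrow> real"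
  assumes "finite (set_pmf p)" "\<And>x. x \<in> set_pmf p \<Longrightarrow> f x \<le> g x"
  shows "measure_pmf.expectation p f \<le> measure_pmf.expectation p g"
  using assms by (intro integral_mono_AE integrable_measure_pmf_finite) (auto simp: AE_measure_pmf_iff)

lemma expectation_affine_finite:
  fixes f g :: "'a \<Rightarrow> real"
  assumes "finite (set_pmf p)"
  shows "measure_pmf.expectation p (\<lambda>x. b * f x + c * g x + k)
    = b * measure_pmf.expectation p f + c * measure_pmf.expectation p g + k"
proof -
  have "integrable (measure_pmf p) h" for h :: "'a \<Rightarrow> real"
    using assms by (rule integrable_measure_pmf_finite)
  then show ?thesis
    by (simp add: Bochner_Integration.integral_add)
qed

definition decay :: real where
  "decay = eps / (1 + eps)"

lemma decay_eq: "decay = 1 / 201"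
  by (simp add: decay_def eps_def)

definition weight :: "nat \<Rightarrow> nat \<Rightarrow> real" where
  "weight tau l = (1 + eps) powi (int tau + 2 - int l)"

lemma Phi_holes: "Phi d (holes tau L) = (\<Sum>i<d. weight tau (L i))"
  by (simp add: Phi_def holes_def weight_def)

lemma Phi_holes_Suc: "Phi d (holes (Suc tau) L) = (1 + eps) * Phi d (holes tau L)"
proof -
  have "(1 + eps) powi (int (Suc tau) + 2 - int (L i)) = (1 + eps) * weight tau (L i)" for i
  proof -
    have "int (Suc tau) + 2 - int (L i) = (int tau + 2 - int (L i)) + 1"
      by simp
    then have "(1 + eps) powi (int (Suc tau) + 2 - int (L i))
        = (1 + eps) powi ((int tau + 2 - int (L i)) + 1)"
      by (rule arg_cong)
    also have "\<dots> = (1 + eps) * weight tau (L i)"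
      unfolding weight_def by (rule power_int_add_1') (simp add: eps_def)
    finally show ?thesis .
  qed
  then show ?thesis
    unfolding Phi_holes[of d tau] by (simp add: Phi_def holes_def sum_distrib_left)
qed

lemma weight_Suc: "weight tau (Suc l) = (1 - decay) * weight tau l"
proof -
  have e: "int tau + 2 - int (Suc l) = (int tau + 2 - int l) - 1"
    by simp
  have "weight tau (Suc l) = weight tau l / (1 + eps)"
    unfolding weight_def e by (subst power_int_diff) (auto simp: eps_def)
  then show ?thesis
    by (simp add: decay_def eps_def field_simps)
qed

lemma weight_ge_one: "l \<le> tau + 2 \<Longrightarrow> 1 \<le> weight tau l"
  by (simp add: weight_def eps_def)

lemma weight_pos: "0 < weight tau l"
  by (simp add: weight_def eps_def)

lemma Phi_holes_fun_upd:
  assumes "i < d"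
  shows "Phi d (holes tau (L(i := v))) = Phi d (holes tau L) - weight tau (L i) + weight tau v"
proof -
  have "(\<Sum>j\<in>{..<d} - {i}. weight tau ((L(i := v)) j)) = (\<Sum>j\<in>{..<d} - {i}. weight tau (L j))"
    by (intro sum.cong) auto
  with assms show ?thesis
    by (simp add: Phi_holes sum.remove[of "{..<d}" i])
qed

lemma Phi_holes_ge:
  assumes "\<forall>i<d. L i \<le> tau + 2"
  shows "real d \<le> Phi d (holes tau L)"
proof -
  have "(\<Sum>i<d. 1) \<le> (\<Sum>i<d. weight tau (L i))"
    using assms by (intro sum_mono weight_ge_one) auto
  then show ?thesis
    by (simp add: Phi_holes)
qed

definition mid_stage :: "nat \<Rightarrow> nat \<Rightarrow> nat \<Rightarrow> (nat \<Rightarrow> nat) \<Rightarrow> bool" where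
  "mid_stage d tau s L \<longleftrightarrow> (\<Sum>i<d. L i) = tau * d + s \<and> (\<forall>i<d. L i \<le> tau + 2)"

lemma mid_stage_open_decks_nonempty:
  assumes "s < d" "mid_stage d tau s L"
  shows "open_decks d L (tau + 2) \<noteq> {}"
  using assms by (intro open_decks_nonempty) (simp add: mid_stage_def algebra_simps)

lemma mid_stage_draw:
  assumes "s < d" "mid_stage d tau s L" "L' \<in> set_pmf (draw d (tau + 2) L)"
  shows "mid_stage d tau (Suc s) L' \<and> Phi d (holes tau L') \<le> Phi d (holes tau L)"
proof -
  obtain i where i: "i \<in> open_decks d L (tau + 2)" and L': "L' = L(i := Suc (L i))"
    using assms(3) mid_stage_open_decks_nonempty[OF assms(1,2)] by (rule set_draw)
  then have "i < d"
    by (simp add: open_decks_def)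
  then have "(\<Sum>i<d. L' i) = tau * d + Suc s"
    using assms(2) by (simp only: L' sum_fun_upd_Suc mid_stage_def)
  moreover have "\<forall>j<d. L' j \<le> tau + 2"
    using assms(2) i by (auto simp: L' mid_stage_def open_decks_def)
  moreover have "Phi d (holes tau L') \<le> Phi d (holes tau L)"
    using \<open>i < d\<close> weight_pos[of tau "L i"]
    by (simp add: L' Phi_holes_fun_upd weight_Suc decay_eq)
  ultimately show ?thesis
    by (simp add: mid_stage_def)
qed

lemma mid_stage_draws:
  assumes "mid_stage d tau 0 L0" "L \<in> set_pmf (draws d (tau + 2) L0 s)" "s \<le> d"
  shows "mid_stage d tau s L \<and> Phi d (holes tau L) \<le> Phi d (holes tau L0)"
  using assms(2,3)
proof (induction s arbitrary: L)
  case (Suc s)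
  then obtain L' where L': "L' \<in> set_pmf (draws d (tau + 2) L0 s)" "L \<in> set_pmf (draw d (tau + 2) L')"
    by auto
  with Suc show ?case
    using mid_stage_draw[of s d tau L' L] by fastforce
qed (use assms(1) in simp)

lemma expectation_draw:
  assumes "open_decks d L b \<noteq> {}"
  shows "measure_pmf.expectation (draw d b L) h
    = (\<Sum>i\<in>open_decks d L b. h (L(i := Suc (L i)))) / real (card (open_decks d L b))"
  using assms by (simp add: draw_def integral_pmf_of_set)

definition full_count :: "nat \<Rightarrow> nat \<Rightarrow> (nat \<Rightarrow> nat) \<Rightarrow> real" where
  "full_count d b L = real (card (full_decks d L b))"

lemma open_decks_Un_full_decks:
  assumes "\<forall>i<d. L i \<le> b"
  shows "open_decks d L b \<union> full_decks d L b = {..<d}"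
    and "open_decks d L b \<inter> full_decks d L b = {}"
  using assms by (auto simp: open_decks_def full_decks_def le_less)

lemma card_open_decks_plus_full_count:
  assumes "\<forall>i<d. L i \<le> b"
  shows "real (card (open_decks d L b)) + full_count d b L = real d"
proof -
  have "card (open_decks d L b) + card (full_decks d L b) = d"
    using card_Un_disjoint[of "open_decks d L b" "full_decks d L b"] open_decks_Un_full_decks[OF assms]
    by simp
  then show ?thesis
    by (simp add: full_count_def flip: of_nat_add)
qed

lemma sum_weight_open_decks:
  assumes "\<forall>i<d. L i \<le> tau + 2"
  shows "(\<Sum>i\<in>open_decks d L (tau + 2). weight tau (L i)) = Phi d (holes tau L) - full_count d (tau + 2) L"
proof -
  have "(\<Sum>i\<in>full_decks d L (tau + 2). weight tau (L i)) = full_count d (tau + 2) L"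
    by (simp add: full_decks_def full_count_def weight_def)
  moreover have "Phi d (holes tau L) = (\<Sum>i\<in>open_decks d L (tau + 2). weight tau (L i))
      + (\<Sum>i\<in>full_decks d L (tau + 2). weight tau (L i))"
    unfolding Phi_holes open_decks_Un_full_decks(1)[OF assms, symmetric]
    by (rule sum.union_disjoint) (auto simp: open_decks_def full_decks_def)
  ultimately show ?thesis
    by simp
qed

lemma expected_Phi_draw:
  assumes "\<forall>i<d. L i \<le> tau + 2" and ne: "open_decks d L (tau + 2) \<noteq> {}"
  shows "measure_pmf.expectation (draw d (tau + 2) L) (\<lambda>L. Phi d (holes tau L))
    = Phi d (holes tau L) - decay * (Phi d (holes tau L) - full_count d (tau + 2) L)
        / real (card (open_decks d L (tau + 2)))"
proof -
  let ?S = "open_decks d L (tau + 2)" and ?P = "Phi d (holes tau L)"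
  have "(\<Sum>i\<in>?S. Phi d (holes tau (L(i := Suc (L i))))) = (\<Sum>i\<in>?S. ?P - decay * weight tau (L i))"
    by (intro sum.cong) (auto simp: Phi_holes_fun_upd open_decks_def weight_Suc algebra_simps)
  also have "\<dots> = real (card ?S) * ?P - decay * (?P - full_count d (tau + 2) L)"
    using sum_weight_open_decks[OF assms(1)] by (simp add: sum_subtractf flip: sum_distrib_left)
  finally show ?thesis
    using ne by (simp add: expectation_draw card_gt_0_iff field_simps)
qed

lemma expected_full_count_draw:
  assumes ne: "open_decks d L b \<noteq> {}"
  shows "measure_pmf.expectation (draw d b L) (full_count d b)
    = full_count d b L + real (card (almost_full_decks d L b)) / real (card (open_decks d L b))"
proof -
  let ?S = "open_decks d L b"
  have "full_count d b (L(i := Suc (L i))) = full_count d b L + of_bool (Suc (L i) = b)" if "i \<in> ?S" for i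
  proof -
    have "full_decks d (L(i := Suc (L i))) b
        = (if Suc (L i) = b then insert i (full_decks d L b) else full_decks d L b)"
      and "i \<notin> full_decks d L b"
      using that by (auto simp: full_decks_def open_decks_def)
    then show ?thesis
      by (simp add: full_count_def)
  qed
  then have "(\<Sum>i\<in>?S. full_count d b (L(i := Suc (L i))))
      = real (card ?S) * full_count d b L + real (card (?S \<inter> {i. Suc (L i) = b}))"
    by (simp add: sum.distrib)
  also have "?S \<inter> {i. Suc (L i) = b} = almost_full_decks d L b"
    by (auto simp: open_decks_def almost_full_decks_def)
  finally have sum: "(\<Sum>i\<in>?S. full_count d b (L(i := Suc (L i))))
      = real (card ?S) * full_count d b L + real (card (almost_full_decks d L b))" .
  show ?thesis
    using ne unfolding expectation_draw[OF ne] sum by (simp add: card_gt_0_iff field_simps)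
qed

lemma almost_full_and_full_decks_bound:
  fixes L :: "nat \<Rightarrow> nat"
  assumes "\<forall>i<d. L i \<le> b"
  shows "2 * d + (\<Sum>i<d. L i) \<le> d * b + card (almost_full_decks d L b) + 2 * card (full_decks d L b)"
proof -
  have "(\<Sum>i<d. 2 + L i) \<le> (\<Sum>i<d. b + of_bool (Suc (L i) = b) + 2 * of_bool (L i = b))"
    using assms by (intro sum_mono) (auto simp: le_Suc_eq)
  moreover have "almost_full_decks d L b = {..<d} \<inter> {i. Suc (L i) = b}"
    and "full_decks d L b = {..<d} \<inter> {i. L i = b}"
    by (auto simp: almost_full_decks_def full_decks_def)
  moreover have "(\<Sum>i<d. 2 + L i) = 2 * d + (\<Sum>i<d. L i)"
    by (simp only: sum.distrib) simp
  ultimately show ?thesis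
    by (simp add: sum.distrib flip: sum_distrib_left)
qed

text \<open>
  Two estimates make the bound linear in \<open>P\<close> and \<open>Z\<close>, so that it survives taking expectations:
  \<open>1/(D - Z) \<ge> (D + Z)/D\<^sup>2\<close>, and \<open>P Z \<ge> P D + P\<^sub>0 Z - P\<^sub>0 D\<close> because \<open>(P\<^sub>0 - P)(D - Z) \<ge> 0\<close>.
\<close>
lemma linearized_drop_bound:
  fixes a D Z P P0 :: real
  assumes "0 \<le> a" "0 \<le> Z" "Z < D" "D \<le> P" "P \<le> P0"
  shows "P - a * (P - Z) / (D - Z) \<le> (1 - 2 * a / D) * P + (a / D) * P0 - (a * P0 / D\<^sup>2) * Z + 2 * a"
proof -
  have D: "0 < D"
    using assms by linarith
  have "(P - Z) * (D + Z) / D\<^sup>2 \<le> (P - Z) / (D - Z)"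
  proof -
    have "(D - Z) * (D + Z) \<le> D\<^sup>2"
      by (simp add: power2_eq_square algebra_simps)
    then have "(D + Z) / D\<^sup>2 \<le> 1 / (D - Z)"
      using assms D by (simp add: divide_simps mult.commute)
    then show ?thesis
      using mult_left_mono[of "(D + Z) / D\<^sup>2" "1 / (D - Z)" "P - Z"] assms by simp
  qed
  moreover have "(2 * P - P0 + P0 * Z / D) / D - 2 \<le> (P - Z) * (D + Z) / D\<^sup>2"
  proof -
    have "(P - Z) * (D + Z) - (D * (2 * P - P0) + P0 * Z - 2 * D\<^sup>2)
        = (P0 - P) * (D - Z) + (D - Z) * (2 * D + Z)"
      by (simp add: algebra_simps power2_eq_square)
    moreover have "0 \<le> (P0 - P) * (D - Z) + (D - Z) * (2 * D + Z)"
      using assms by (intro add_nonneg_nonneg mult_nonneg_nonneg) auto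
    ultimately have "(D * (2 * P - P0) + P0 * Z - 2 * D\<^sup>2) / D\<^sup>2 \<le> (P - Z) * (D + Z) / D\<^sup>2"
      by (intro divide_right_mono) auto
    then show ?thesis
      using D by (simp add: field_simps power2_eq_square)
  qed
  ultimately have "a * ((2 * P - P0 + P0 * Z / D) / D - 2) \<le> a * ((P - Z) / (D - Z))"
    using assms(1) by (intro mult_left_mono) auto
  then have "P - a * (P - Z) / (D - Z) \<le> P - a * ((2 * P - P0 + P0 * Z / D) / D - 2)"
    by simp
  also have "\<dots> = (1 - 2 * a / D) * P + (a / D) * P0 - (a * P0 / D\<^sup>2) * Z + 2 * a"
    using D by (simp add: field_simps power2_eq_square)
  finally show ?thesis .
qed

lemma expected_Phi_draw_le:
  assumes "s < d" "mid_stage d tau s L" "Phi d (holes tau L) \<le> P0"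
  shows "measure_pmf.expectation (draw d (tau + 2) L) (\<lambda>L. Phi d (holes tau L))
    \<le> (1 - 2 * decay / d) * Phi d (holes tau L) + (decay / d) * P0
       - (decay * P0 / (real d)\<^sup>2) * full_count d (tau + 2) L + 2 * decay"
proof -
  have le: "\<forall>i<d. L i \<le> tau + 2" and ne: "open_decks d L (tau + 2) \<noteq> {}"
    using assms mid_stage_open_decks_nonempty by (auto simp: mid_stage_def)
  have card: "real (card (open_decks d L (tau + 2))) = real d - full_count d (tau + 2) L"
    using card_open_decks_plus_full_count[OF le] by simp
  show ?thesis
    unfolding expected_Phi_draw[OF le ne] card
  proof (rule linearized_drop_bound)
    have "0 < card (open_decks d L (tau + 2))"
      using ne by (simp add: card_gt_0_iff)
    with card show "full_count d (tau + 2) L < real d"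
      by linarith
  qed (use assms(3) Phi_holes_ge[OF le] in \<open>auto simp: decay_eq full_count_def\<close>)
qed

lemma expected_full_count_draw_ge:
  assumes "s < d" "mid_stage d tau s L"
  shows "(1 - 2 / d) * full_count d (tau + 2) L + s / d
    \<le> measure_pmf.expectation (draw d (tau + 2) L) (full_count d (tau + 2))"
proof -
  let ?S = "open_decks d L (tau + 2)" and ?A = "real (card (almost_full_decks d L (tau + 2)))"
    and ?Z = "full_count d (tau + 2) L"
  have le: "\<forall>i<d. L i \<le> tau + 2" and ne: "?S \<noteq> {}"
    using assms mid_stage_open_decks_nonempty by (auto simp: mid_stage_def)
  have S: "0 < real (card ?S)" "real (card ?S) \<le> d"
    using ne card_open_decks_plus_full_count[OF le] by (auto simp: card_gt_0_iff full_count_def)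
  have "real s \<le> ?A + 2 * ?Z"
    using almost_full_and_full_decks_bound[OF le] assms(2)
    by (simp add: mid_stage_def full_count_def algebra_simps flip: of_nat_add of_nat_mult)
  then have "(s - 2 * ?Z) / d \<le> ?A / d"
    by (intro divide_right_mono) auto
  moreover have "(1 - 2 / d) * ?Z + s / d = ?Z + (s - 2 * ?Z) / d"
    using assms(1) by (simp add: field_simps)
  ultimately have "(1 - 2 / d) * ?Z + s / d \<le> ?Z + ?A / d"
    by simp
  also have "\<dots> \<le> ?Z + ?A / card ?S"
    using S by (simp add: frac_le)
  finally show ?thesis
    using expected_full_count_draw[OF ne] by simp
qed

lemma expected_full_count_draws_ge:
  assumes d: "2 \<le> d" and L0: "mid_stage d tau 0 L0" and "s \<le> d"
  shows "real s * (real s - 1) / (6 * real d)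
    \<le> measure_pmf.expectation (draws d (tau + 2) L0 s) (full_count d (tau + 2))"
  using assms(3)
proof (induction s)
  case (Suc s)
  let ?p = "draws d (tau + 2) L0 s" and ?Z = "full_count d (tau + 2)"
  have s: "s < d"
    using Suc by simp
  have "real (Suc s) * (real (Suc s) - 1) / (6 * real d)
      \<le> (1 - 2 / d) * (real s * (real s - 1) / (6 * real d)) + s / d"
  proof -
    have "(1 - 2 / d) * (real s * (real s - 1) / (6 * real d)) + s / d
        - real (Suc s) * (real (Suc s) - 1) / (6 * real d)
        = real s * (2 * d - (real s - 1)) / (3 * (real d)\<^sup>2)"
      using d by (simp add: field_simps power2_eq_square)
    also have "\<dots> \<ge> 0"
      using s by (intro divide_nonneg_nonneg mult_nonneg_nonneg) auto
    finally show ?thesis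
      by simp
  qed
  also have "\<dots> \<le> (1 - 2 / d) * measure_pmf.expectation ?p ?Z + s / d"
    using Suc s d by (intro add_right_mono mult_left_mono) (auto simp: field_simps)
  also have "\<dots> = measure_pmf.expectation ?p (\<lambda>L. (1 - 2 / d) * ?Z L + s / d)"
    by (simp add: expectation_affine_finite[where c = 0, simplified])
  also have "\<dots> \<le> measure_pmf.expectation ?p (\<lambda>L. measure_pmf.expectation (draw d (tau + 2) L) ?Z)"
    using mid_stage_draws[OF L0] Suc.prems
    by (intro expectation_mono_finite expected_full_count_draw_ge[OF s]) auto
  also have "\<dots> = measure_pmf.expectation (draws d (tau + 2) L0 (Suc s)) ?Z"
    by (simp add: expectation_bind_pmf_finite)
  finally show ?case .
qed (simp add: full_count_def)

text \<open>
  The constant is chosen (just) small enough for \<open>decay + gain \<le> 2 decay (1 - gain - decay/18)\<close>,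
  on which \<open>stage_factor_Suc\<close> rests, and large enough for \<open>(1 + \<epsilon>)(1 - gain - decay/36) < 1\<close>.
\<close>
definition gain :: real where
  "gain = 197 / 40401"

text \<open>The cubic term accumulates the gains \<open>decay E Z / d\<^sup>2\<close> with \<open>E Z \<ge> s(s - 1)/(6d)\<close>.\<close>
definition stage_factor :: "nat \<Rightarrow> nat \<Rightarrow> real" where
  "stage_factor d s = 1 - gain * s / d - decay * (real s * (real s - 1) * (real s - 2)) / (18 * (real d)^3)"

lemma stage_factor_ge:
  assumes "s \<le> d"
  shows "1 - gain - decay / 18 \<le> stage_factor d s"
proof -
  have "real s * (real s - 1) * (real s - 2) \<le> real s ^ 3"
    by (cases s) (auto simp: algebra_simps power3_eq_cube)
  also have "\<dots> \<le> real d ^ 3"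
    using assms by (intro power_mono) auto
  finally have "decay * (real s * (real s - 1) * (real s - 2)) / (18 * (real d)^3) \<le> decay / 18"
    by (cases "d = 0") (auto simp: decay_eq divide_simps)
  moreover have "gain * s / d \<le> gain"
    using assms by (cases "d = 0") (auto simp: gain_def divide_simps)
  ultimately show ?thesis
    by (simp add: stage_factor_def)
qed

lemma stage_factor_Suc:
  assumes "s < d"
  shows "(1 - 2 * decay / d) * stage_factor d s + decay / d - decay * (real s * (real s - 1) / (6 * real d)) / (real d)\<^sup>2
    \<le> stage_factor d (Suc s)"
proof -
  have d: "0 < real d"
    using assms by simp
  have "decay + gain \<le> 2 * decay * (1 - gain - decay / 18)"
    by (simp add: decay_eq gain_def)
  also have "\<dots> \<le> 2 * decay * stage_factor d s"
    using stage_factor_ge[of s d] assms by (simp add: decay_eq)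
  finally have "(decay + gain) / d \<le> 2 * decay * stage_factor d s / d"
    using d by (intro divide_right_mono) auto
  then have "(1 - 2 * decay / d) * stage_factor d s + decay / d \<le> stage_factor d s - gain / d"
    by (simp add: field_simps add_divide_distrib)
  moreover have "stage_factor d (Suc s)
      = stage_factor d s - gain / d - decay * (real s * (real s - 1) / (6 * real d)) / (real d)\<^sup>2"
    using d by (simp add: stage_factor_def field_simps power2_eq_square power3_eq_cube)
  ultimately show ?thesis
    by simp
qed

lemma expected_Phi_draws_le:
  assumes d: "2 \<le> d" and L0: "mid_stage d tau 0 L0" and "s \<le> d"
  shows "measure_pmf.expectation (draws d (tau + 2) L0 s) (\<lambda>L. Phi d (holes tau L))
    \<le> stage_factor d s * Phi d (holes tau L0) + 2 * decay * s"
  using assms(3)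
proof (induction s)
  case (Suc s)
  let ?p = "draws d (tau + 2) L0 s" and ?Phi = "\<lambda>L. Phi d (holes tau L)" and ?Z = "full_count d (tau + 2)"
  let ?P0 = "?Phi L0" and ?b = "1 - 2 * decay / d" and ?c = "decay * ?Phi L0 / (real d)\<^sup>2"
  have s: "s < d"
    using Suc by simp
  have P0: "0 \<le> ?P0"
    using Phi_holes_ge[of d L0 tau] L0 by (simp add: mid_stage_def)
  have "measure_pmf.expectation (draws d (tau + 2) L0 (Suc s)) ?Phi
      = measure_pmf.expectation ?p (\<lambda>L. measure_pmf.expectation (draw d (tau + 2) L) ?Phi)"
    by (simp add: expectation_bind_pmf_finite)
  also have "\<dots> \<le> measure_pmf.expectation ?p (\<lambda>L. ?b * ?Phi L + (- ?c) * ?Z L + (decay / d * ?P0 + 2 * decay))"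
  proof (rule expectation_mono_finite)
    fix L assume "L \<in> set_pmf ?p"
    then have "mid_stage d tau s L" "?Phi L \<le> ?P0"
      using mid_stage_draws[OF L0] Suc.prems by auto
    from expected_Phi_draw_le[OF s this]
    show "measure_pmf.expectation (draw d (tau + 2) L) ?Phi
        \<le> ?b * ?Phi L + (- ?c) * ?Z L + (decay / d * ?P0 + 2 * decay)"
      by linarith
  qed simp
  also have "\<dots> = ?b * measure_pmf.expectation ?p ?Phi - ?c * measure_pmf.expectation ?p ?Z
      + (decay / d * ?P0 + 2 * decay)"
    by (subst expectation_affine_finite) simp_all
  also have "\<dots> \<le> ?b * (stage_factor d s * ?P0 + 2 * decay * s) - ?c * (real s * (real s - 1) / (6 * real d))
      + (decay / d * ?P0 + 2 * decay)"
    using Suc s d P0 expected_full_count_draws_ge[OF d L0, of s]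
    by (intro add_right_mono diff_mono mult_left_mono) (auto simp: decay_eq field_simps)
  also have "\<dots> \<le> stage_factor d (Suc s) * ?P0 + 2 * decay * Suc s"
  proof -
    have "(?b * stage_factor d s + decay / d - decay * (real s * (real s - 1) / (6 * real d)) / (real d)\<^sup>2) * ?P0
        \<le> stage_factor d (Suc s) * ?P0"
      using stage_factor_Suc[OF s] P0 by (intro mult_right_mono)
    moreover have "?b * (2 * decay * s) \<le> 2 * decay * s"
      using s by (simp add: decay_eq field_simps)
    ultimately show ?thesis
      by (simp add: algebra_simps)
  qed
  finally show ?case .
qed (simp add: stage_factor_def)

lemma stage_factor_full_stage:
  assumes "8 \<le> d"
  shows "stage_factor d d \<le> 1 - gain - decay / 36"
proof -
  have "2 * (real d * (real d - 1) * (real d - 2)) - real d ^ 3 = real d * (real d * (real d - 6) + 4)"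
    by (simp add: algebra_simps power3_eq_cube)
  also have "\<dots> \<ge> 0"
    using assms by (intro mult_nonneg_nonneg add_nonneg_nonneg) auto
  finally have "decay / 36 \<le> decay * (real d * (real d - 1) * (real d - 2)) / (18 * real d ^ 3)"
    using assms by (simp add: decay_eq divide_simps)
  then show ?thesis
    using assms by (simp add: stage_factor_def)
qed

lemma expected_Phi_next_stage_le:
  assumes d: "8 \<le> d" and L0: "mid_stage d tau 0 L0"
  shows "measure_pmf.expectation (draws d (tau + 2) L0 d) (\<lambda>L. Phi d (holes (Suc tau) L))
    \<le> (1 + eps) * (1 - gain - decay / 36) * Phi d (holes tau L0) + d / 100"
proof -
  let ?P0 = "Phi d (holes tau L0)"
  have P0: "0 \<le> ?P0"
    using Phi_holes_ge[of d L0 tau] L0 by (simp add: mid_stage_def)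
  have "measure_pmf.expectation (draws d (tau + 2) L0 d) (\<lambda>L. Phi d (holes (Suc tau) L))
      = (1 + eps) * measure_pmf.expectation (draws d (tau + 2) L0 d) (\<lambda>L. Phi d (holes tau L))"
    by (simp add: Phi_holes_Suc)
  also have "\<dots> \<le> (1 + eps) * (stage_factor d d * ?P0 + 2 * decay * d)"
    using expected_Phi_draws_le[of d tau L0 d] d L0 by (intro mult_left_mono) (auto simp: eps_def)
  also have "\<dots> \<le> (1 + eps) * ((1 - gain - decay / 36) * ?P0 + 2 * decay * d)"
    using stage_factor_full_stage[OF d] P0 by (intro mult_left_mono add_right_mono mult_right_mono)
      (auto simp: eps_def)
  also have "\<dots> = (1 + eps) * (1 - gain - decay / 36) * ?P0 + d / 100"
    by (simp add: decay_def eps_def algebra_simps)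
  finally show ?thesis .
qed

lemma adaptive_run_pmf_stage_start:
  assumes "0 < d" "L \<in> set_pmf (adaptive_run_pmf d (tau * d))"
  shows "(\<Sum>i<d. L i) = tau * d \<and> (\<forall>i<d. L i \<le> tau + 1)"
  using adaptive_run_pmf_invariant[OF assms] threshold_stage_start[OF assms(1)] by simp

lemma expected_Phi_le_large_d:
  assumes d: "8 \<le> d"
  shows "measure_pmf.expectation (adaptive_run_pmf d (tau * d)) (\<lambda>L. Phi d (holes tau L)) \<le> 254 * real d"
proof (induction tau)
  case 0
  have "Phi d (holes 0 (\<lambda>_. 0)) = (201 / 200)\<^sup>2 * real d"
    by (simp add: Phi_def holes_def eps_def)
  also have "\<dots> \<le> 254 * real d"
    by (intro mult_right_mono) (auto simp: power2_eq_square)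
  finally show ?case
    by simp
next
  case (Suc tau)
  let ?p = "adaptive_run_pmf d (tau * d)" and ?r = "(1 + eps) * (1 - gain - decay / 36)"
  have "adaptive_run_pmf d (Suc tau * d) = ?p \<bind> (\<lambda>L0. draws d (tau + 2) L0 d)"
    using adaptive_run_pmf_stage[of d d tau] by (simp add: add.commute)
  then have "measure_pmf.expectation (adaptive_run_pmf d (Suc tau * d)) (\<lambda>L. Phi d (holes (Suc tau) L))
      = measure_pmf.expectation ?p
          (\<lambda>L0. measure_pmf.expectation (draws d (tau + 2) L0 d) (\<lambda>L. Phi d (holes (Suc tau) L)))"
    by (simp add: expectation_bind_pmf_finite)
  also have "\<dots> \<le> measure_pmf.expectation ?p (\<lambda>L0. ?r * Phi d (holes tau L0) + d / 100)"
  proof (rule expectation_mono_finite)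
    fix L0 assume "L0 \<in> set_pmf ?p"
    then have "mid_stage d tau 0 L0"
      using adaptive_run_pmf_stage_start[of d L0 tau] d by (auto simp: mid_stage_def)
    then show "measure_pmf.expectation (draws d (tau + 2) L0 d) (\<lambda>L. Phi d (holes (Suc tau) L))
        \<le> ?r * Phi d (holes tau L0) + d / 100"
      by (rule expected_Phi_next_stage_le[OF d])
  qed simp
  also have "\<dots> = ?r * measure_pmf.expectation ?p (\<lambda>L. Phi d (holes tau L)) + d / 100"
    by (simp add: expectation_affine_finite[where c = 0, simplified])
  also have "\<dots> \<le> ?r * (254 * real d) + d / 100"
    using Suc by (intro add_right_mono mult_left_mono) (auto simp: gain_def decay_eq eps_def)
  also have "\<dots> \<le> 254 * real d"
    by (simp add: gain_def decay_eq eps_def)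
  finally show ?case .
qed

lemma Phi_holes_le_stage_start:
  assumes "(\<Sum>i<d. L i) = tau * d" "\<forall>i<d. L i \<le> tau + 1"
  shows "Phi d (holes tau L) \<le> real d * (1 + eps) ^ (d + 1)"
proof -
  have "weight tau (L i) \<le> (1 + eps) ^ (d + 1)" if i: "i < d" for i
  proof -
    have "(\<Sum>j\<in>{..<d} - {i}. L j) \<le> (\<Sum>j\<in>{..<d} - {i}. tau + 1)"
      using assms(2) by (intro sum_mono) auto
    then have "tau * d \<le> L i + (d - 1) * (tau + 1)"
      using assms(1) i by (simp add: sum.remove[of "{..<d}" i])
    then have "tau + 2 - L i \<le> d + 1"
      using i by (cases d) (auto simp: algebra_simps)
    moreover have "int tau + 2 - int (L i) = int (tau + 2 - L i)"
      using assms(2) i by fastforce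
    ultimately show ?thesis
      unfolding weight_def by (simp only: power_int_of_nat) (intro power_increasing, auto simp: eps_def)
  qed
  then have "(\<Sum>i<d. weight tau (L i)) \<le> (\<Sum>i<d. (1 + eps) ^ (d + 1))"
    by (intro sum_mono) auto
  then show ?thesis
    by (simp add: Phi_holes)
qed

lemma expected_Phi_le:
  assumes d: "0 < d"
  shows "measure_pmf.expectation (adaptive_run_pmf d (tau * d)) (\<lambda>L. Phi d (holes tau L)) \<le> 254 * real d"
proof (cases "8 \<le> d")
  case False
  have "measure_pmf.expectation (adaptive_run_pmf d (tau * d)) (\<lambda>L. Phi d (holes tau L))
      \<le> measure_pmf.expectation (adaptive_run_pmf d (tau * d)) (\<lambda>_. real d * (1 + eps) ^ (d + 1))"
    using adaptive_run_pmf_stage_start[OF d] Phi_holes_le_stage_start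
    by (intro expectation_mono_finite) auto
  also have "\<dots> = real d * (1 + eps) ^ (d + 1)"
    by simp
  also have "\<dots> \<le> real d * (1 + eps) ^ 8"
    using False by (intro mult_left_mono power_increasing) (auto simp: eps_def)
  also have "\<dots> \<le> 254 * real d"
    by (simp add: eps_def power_numeral_reduce)
  finally show ?thesis .
qed (rule expected_Phi_le_large_d)

theorem corollary3p5:
  shows "\<exists>C::real. \<forall>n d tau :: nat.
           0 < d \<longrightarrow> d dvd n \<longrightarrow> tau * d \<le> n - 2 * d \<longrightarrow>
           (\<integral>\<^sup>+L. ennreal (Phi d (holes tau L)) \<partial>measure_spmf (adaptive_run d (tau * d))) \<le> ennreal (C * real d)"
proof (intro exI allI impI)
  \<comment> \<open>The bound holds at every stage.\<close>
  fix n d tau :: nat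
  assume d: "0 < d"
  let ?p = "adaptive_run_pmf d (tau * d)"
  have "(\<integral>\<^sup>+L. ennreal (Phi d (holes tau L)) \<partial>measure_spmf (adaptive_run d (tau * d)))
      = ennreal (measure_pmf.expectation ?p (\<lambda>L. Phi d (holes tau L)))"
    unfolding adaptive_run_eq_spmf_of_pmf[OF d] measure_spmf_spmf_of_pmf
  proof (rule nn_integral_eq_integral)
    show "AE L in measure_pmf ?p. 0 \<le> Phi d (holes tau L)"
      by (auto simp: Phi_holes AE_measure_pmf_iff intro!: sum_nonneg less_imp_le[OF weight_pos])
  qed (simp add: integrable_measure_pmf_finite)
  also have "\<dots> \<le> ennreal (254 * real d)"
    using expected_Phi_le[OF d] by (rule ennreal_leI)
  finally show "(\<integral>\<^sup>+L. ennreal (Phi d (holes tau L)) \<partial>measure_spmf (adaptive_run d (tau * d)))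
      \<le> ennreal (254 * real d)" .
qed

end
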